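(* Let $\beta\in(0,\pi/2)$ be defined by $\cot\beta=\frac{\ln(2\pi+1)}{2\pi}$ (so $\beta\approx 1.264714$ and $\frac{1}{\cos\beta}\approx 3.3186738$), and fix $a>0$. For a starting point $s$, consider the spiral strategy: the path that, in polar coordinates centred at $s$ (with an arbitrary reference direction), follows the logarithmic spiral $\varphi\mapsto(\varphi,\,a\,e^{\varphi\cot\beta})$ for increasing $\varphi\in(-\infty,\infty)$, starting at $s$ (its arc length from $s$ up to the point with angle $\varphi$ is $\frac{a}{\cos\beta}e^{\varphi\cot\beta}$). Then for every environment $P$ and every starting point $s$ in the kernel of $P$, and for every rotation of $P$ about $s$, this spiral path reaches the boundary $\partial P$ after a path length smaller than $3.318674\cdot \Pi_s$, where $\Pi_s$ is the length of the certificate path of $P$ at $s$.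
   Context: An environment is the closed bounded region $P\subset\mathbb{R}^2$ enclosed by a closed Jordan curve $\partial P$. The kernel of $P$ is the set of points $s\in P$ such that for every $q\in P$ the segment $sq$ lies in $P$ (so from $s$ each ray meets $\partial P$ in exactly one point). For $s$ in the interior of $P$ and $x>0$, let $C_s(x)$ be the circle of radius $x$ centred at $s$. For $x$ such that $C_s(x)\cap\partial P\neq\emptyset$, let $\alpha_s(x)\in[0,2\pi]$ be the supremum of the angles of arcs of $C_s(x)$ contained in the interior of $P$ (and $0$ if there is none). A circular strategy for distance $x$ moves from $s$ straight a distance $x$ in some direction and then along $C_s(x)$ (in a fixed orientation) for an angle $\alpha_s(x)$; it meets $\partial P$ regardless of the starting direction, and has length $x(1+\alpha_s(x))$. The certificate path of $P$ at $s$ has length $\Pi_s=\min_x x(1+\alpha_s(x))$, the minimum over all $x>0$ with $C_s(x)\cap\partial P\neq\emptyset$. The path length of a strategy is measured from $s$ to the first point at which it meets $\partial P$. *)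

theory Defs
  imports "HOL-Analysis.Analysis"
begin

definition environment :: "complex set \<Rightarrow> complex set \<Rightarrow> bool" where
  "environment P B \<longleftrightarrow>
     (\<exists>g. simple_path g \<and> pathfinish g = pathstart g \<and> B = path_image g \<and> P = B \<union> inside B)"

definition kernel :: "complex set \<Rightarrow> complex set" where
  "kernel P = {s \<in> P. \<forall>q\<in>P. closed_segment s q \<subseteq> P}"

definition arc_angle :: "complex set \<Rightarrow> complex \<Rightarrow> real \<Rightarrow> real" where
  "arc_angle P s x = Sup ({0} \<union> {w. 0 \<le> w \<and> w \<le> 2 * pi \<and>
       (\<exists>\<theta>. \<forall>t\<in>{\<theta>..\<theta>+w}. s + of_real x * cis t \<in> interior P)})"

text \<open>Length of the certificate path: min (here: infimum) of x (1 + alpha(x)) over all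
x > 0 with C_s(x) meeting the boundary B.\<close>

definition certificate_length :: "complex set \<Rightarrow> complex set \<Rightarrow> complex \<Rightarrow> real" where
  "certificate_length P B s =
     Inf {x * (1 + arc_angle P s x) | x. x > 0 \<and> sphere s x \<inter> B \<noteq> {}}"

definition spiral_beta :: real where
  "spiral_beta = arctan (2 * pi / ln (2 * pi + 1))"

definition spiral :: "real \<Rightarrow> real \<Rightarrow> complex \<Rightarrow> real \<Rightarrow> complex" where
  "spiral a \<theta>0 s \<phi> = s + of_real (a * exp (\<phi> * cot spiral_beta)) * cis (\<theta>0 + \<phi>)"

definition spiral_length :: "real \<Rightarrow> real \<Rightarrow> real" where
  "spiral_length a \<phi> = a / cos spiral_beta * exp (\<phi> * cot spiral_beta)"

end

theory Submission
  imports Defs "HOL-Analysis.Harmonic_Numbers"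
begin

text \<open>Let \<open>\<phi>\<close> be the first angle at which the spiral meets the boundary, and let \<open>x\<close> be
any radius at which the circle around \<open>s\<close> meets the boundary. Starting anywhere, the circle
leaves the interior within an arc of angle \<open>\<alpha>(x)\<close>; start it at the angle where the spiral
has radius \<open>x\<close>. Since \<open>s\<close> lies in the kernel, a spiral point that is further out than the
circle point in the same direction is not interior if the circle point is not, so the spiral
leaves the interior no later than that arc ends. Hence its radius at \<open>\<phi>\<close> is at most
\<open>x exp (\<alpha>(x) cot \<beta>)\<close>, which by convexity and the choice of \<open>\<beta>\<close> is at most
\<open>x (1 + \<alpha>(x))\<close>. Arc length is radius divided by \<open>cos \<beta>\<close>, and \<open>1 / cos \<beta> < 3.318674\<close>.\<close>

lemma ln_ge_series_partial_sum:
  fixes x :: real assumes "x > 1"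
  shows "(\<Sum>k<n. 2 * ((x - 1) / (x + 1)) ^ (2*k+1) / of_nat (2*k+1)) \<le> ln x"
  using ln_approx_bounds[OF assms, of n] by simp

text \<open>Since \<open>1 / cos \<beta> \<approx> 3.3186738\<close>, the constant of the theorem leaves a relative margin of
about \<open>10\<^sup>-\<^sup>7\<close>, so \<open>ln (2\<pi> + 1)\<close> is needed to seven digits.\<close>

lemma ln_2pi_plus_1_ge: "1.9855683 \<le> ln (2 * pi + 1)"
proof -
  define c :: real where "c = (2 * 3.141592653588 + 1) / (36/5)"
  have "0.69314718045 \<le> ln (2::real)"
    using ln_ge_series_partial_sum[of 2 9] by (simp add: numeral_eq_Suc lessThan_Suc)
  moreover have "0.58778666483 \<le> ln (9/5::real)"
    using ln_ge_series_partial_sum[of "9/5" 8] by (simp add: numeral_eq_Suc lessThan_Suc)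
  moreover have "0.01148727427 \<le> ln c"
    using ln_ge_series_partial_sum[of c 2] by (simp add: c_def numeral_eq_Suc lessThan_Suc)
  moreover have "ln (2 * 3.141592653588 + 1) = 2 * ln 2 + ln (9/5) + ln c"
  proof -
    have split: "(2 * 3.141592653588 + 1 :: real) = 2 * (2 * (9/5 * c))" by (simp add: c_def)
    have "c > 0" by (simp add: c_def)
    hence "ln (2 * (2 * (9/5 * c))) = 2 * ln 2 + ln (9/5) + ln c"
      using ln_mult[of 2 "2 * (9/5 * c)"] ln_mult[of 2 "9/5 * c"] ln_mult[of "9/5" c] by simp
    thus ?thesis by (metis split)
  qed
  moreover have "ln (2 * 3.141592653588 + 1) \<le> ln (2 * pi + 1)"
    using pi_approx by simp
  ultimately show ?thesis by simp
qed

lemma cot_spiral_beta: "cot spiral_beta = ln (2 * pi + 1) / (2 * pi)"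
proof -
  have "ln (2 * pi + 1) > 0" using pi_gt_zero by (intro ln_gt_zero) linarith
  thus ?thesis by (simp add: spiral_beta_def cot_def cos_arctan sin_arctan add_nonneg_eq_0_iff)
qed

lemma cot_spiral_beta_pos: "cot spiral_beta > 0"
proof -
  have "ln (2 * pi + 1) > 0" using pi_gt_zero by (intro ln_gt_zero) linarith
  thus ?thesis by (simp add: cot_spiral_beta)
qed

lemma cos_spiral_beta_pos: "cos spiral_beta > 0"
  by (simp add: spiral_beta_def cos_arctan add_pos_nonneg)

lemma inverse_cos_spiral_beta_less: "1 / cos spiral_beta < 3.318674"
proof -
  define u where "u = 2 * pi / ln (2 * pi + 1)"
  have L: "1.9855683 \<le> ln (2 * pi + 1)" by (rule ln_2pi_plus_1_ge)
  have "(2 * pi)\<^sup>2 \<le> (2 * 3.1415926535899)\<^sup>2" using pi_approx by (intro power_mono) auto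
  also have "\<dots> < 1.9855683\<^sup>2 * (3.318674\<^sup>2 - 1)" by (simp add: power2_eq_square)
  also have "\<dots> \<le> (ln (2 * pi + 1))\<^sup>2 * (3.318674\<^sup>2 - 1)"
    using L by (intro mult_right_mono power_mono) auto
  finally have "1 + u\<^sup>2 < 3.318674\<^sup>2"
    using L by (simp add: u_def field_simps)
  hence "sqrt (1 + u\<^sup>2) < 3.318674"
    using real_sqrt_less_iff[of "1 + u\<^sup>2" "3.318674\<^sup>2"] by simp
  thus ?thesis by (simp add: spiral_beta_def cos_arctan u_def)
qed

lemma environment_boundary:
  assumes "environment P B"
  shows "closed B" "B \<noteq> {}" "B \<inter> interior P = {}" "frontier (interior P) \<subseteq> B"
proof -
  obtain g where g: "simple_path g" "pathfinish g = pathstart g" "B = path_image g"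
    and P: "P = B \<union> inside B"
    using assms by (auto simp: environment_def)
  note Jordan = Jordan_inside_outside[OF g(1,2), folded g(3)]
  show "closed B"
    using g by (simp add: compact_imp_closed compact_simple_path_image)
  show "B \<noteq> {}"
    using g by simp
  show "B \<inter> interior P = {}"
  proof (rule ccontr)
    assume "B \<inter> interior P \<noteq> {}"
    then obtain b e where b: "b \<in> B" "e > 0" "ball b e \<subseteq> P"
      by (meson disjoint_iff mem_interior)
    have "b \<in> closure (outside B)"
      using Jordan b(1) by (metis Diff_iff frontier_def)
    then obtain y where "y \<in> outside B" "dist y b < e"
      using b(2) closure_approachable by blast
    hence "y \<in> outside B \<inter> P" using b(3) by (auto simp: dist_commute)
    thus False using Jordan P outside_no_overlap by blast
  qed
  have "closure (inside B) \<subseteq> P"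
    using closure_inside_subset \<open>closed B\<close> P by blast
  hence "P = B \<union> closure (inside B)"
    using P closure_subset by blast
  hence "closed P"
    using \<open>closed B\<close> by auto
  have "inside B \<subseteq> interior P"
    using Jordan P by (simp add: interior_maximal)
  hence "P - interior P \<subseteq> B" using P by blast
  moreover have "closure (interior P) \<subseteq> P"
    using \<open>closed P\<close> by (simp add: closure_minimal interior_subset)
  ultimately show "frontier (interior P) \<subseteq> B"
    by (auto simp: frontier_def)
qed

lemma kernel_contraction_in_interior:
  assumes "s \<in> kernel P" "z \<in> interior P" "0 < l" "l \<le> 1"
  shows "s + of_real l * (z - s) \<in> interior P"
proof -
  define h where "h p = (s - l *\<^sub>R s) + l *\<^sub>R p" for p
  have "h ` interior P \<subseteq> P"
  proof
    fix p assume "p \<in> h ` interior P"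
    then obtain q where q: "q \<in> interior P" "p = h q" by blast
    have "p = (1 - l) *\<^sub>R s + l *\<^sub>R q"
      using q(2) by (simp add: h_def scaleR_diff_left)
    hence "p \<in> closed_segment s q"
      unfolding in_segment by (intro exI[of _ l]) (use assms(3,4) in auto)
    moreover have "q \<in> P" using q(1) interior_subset by blast
    ultimately show "p \<in> P" using assms(1) by (auto simp: kernel_def)
  qed
  moreover have "open (h ` interior P)"
    unfolding h_def using assms(3) by (intro open_affinity) auto
  ultimately have "h ` interior P \<subseteq> interior P"
    by (rule interior_maximal)
  hence "h z \<in> interior P" using assms(2) by blast
  moreover have "h z = s + of_real l * (z - s)"
    by (simp add: h_def scaleR_conv_of_real right_diff_distrib)
  ultimately show ?thesis by simp
qed

lemma circle_point_eq_cis: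
  fixes z s :: complex
  assumes "norm (z - s) = x" "x > 0"
  shows "\<exists>t\<in>{c..c + 2 * pi}. z = s + of_real x * cis t"
proof -
  have "z - s \<noteq> 0" using assms by auto
  define \<theta> where "\<theta> = Arg (z - s)"
  have cis_\<theta>: "z = s + of_real x * cis \<theta>"
    using cis_Arg[OF \<open>z - s \<noteq> 0\<close>] assms
    by (simp add: \<theta>_def sgn_div_norm scaleR_conv_of_real field_simps)
  define n where "n = \<lceil>(c - \<theta>) / (2 * pi)\<rceil>"
  have "(c - \<theta>) / (2 * pi) \<le> n" "n < (c - \<theta>) / (2 * pi) + 1"
    unfolding n_def by linarith+
  hence "\<theta> + 2 * pi * of_int n \<in> {c..c + 2 * pi}"
    using pi_gt_zero by (simp add: field_simps)
  moreover have "cis (\<theta> + 2 * pi * of_int n) = cis \<theta>"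
    by (simp add: cis_mult[symmetric])
  ultimately show ?thesis using cis_\<theta> by metis
qed

lemma arc_angle_nonneg: "0 \<le> arc_angle P s x"
  and arc_angle_le_2pi: "arc_angle P s x \<le> 2 * pi"
  and arc_angle_ge:
    "\<lbrakk>0 \<le> w; w \<le> 2 * pi; \<forall>t\<in>{\<theta>..\<theta> + w}. s + of_real x * cis t \<in> interior P\<rbrakk>
       \<Longrightarrow> w \<le> arc_angle P s x"
proof -
  define A where "A = {0} \<union> {w. 0 \<le> w \<and> w \<le> 2 * pi \<and>
       (\<exists>\<theta>. \<forall>t\<in>{\<theta>..\<theta> + w}. s + of_real x * cis t \<in> interior P)}"
  have arc_angle: "arc_angle P s x = Sup A" by (simp add: arc_angle_def A_def)
  have bdd: "bdd_above A" by (rule bdd_aboveI[of _ "2 * pi"]) (auto simp: A_def)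
  show "0 \<le> arc_angle P s x"
    unfolding arc_angle by (rule cSup_upper[OF _ bdd]) (simp add: A_def)
  show "arc_angle P s x \<le> 2 * pi"
    unfolding arc_angle by (rule cSup_least) (auto simp: A_def)
  show "w \<le> arc_angle P s x"
    if "0 \<le> w" "w \<le> 2 * pi" "\<forall>t\<in>{\<theta>..\<theta> + w}. s + of_real x * cis t \<in> interior P"
    unfolding arc_angle by (rule cSup_upper[OF _ bdd]) (use that in \<open>auto simp: A_def\<close>)
qed

lemma circle_exits_interior_within_arc_angle:
  assumes "B \<inter> interior P = {}" "x > 0" "sphere s x \<inter> B \<noteq> {}"
  shows "\<exists>t\<in>{\<theta>..\<theta> + arc_angle P s x}. s + of_real x * cis t \<notin> interior P"
proof (rule ccontr)
  define \<alpha> where "\<alpha> = arc_angle P s x"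
  define f where "f t = s + of_real x * cis t" for t
  assume "\<not> (\<exists>t\<in>{\<theta>..\<theta> + arc_angle P s x}. s + of_real x * cis t \<notin> interior P)"
  hence arc: "\<forall>t\<in>{\<theta>..\<theta> + \<alpha>}. f t \<in> interior P" by (simp add: \<alpha>_def f_def)
  consider "\<alpha> < 2 * pi" | "\<alpha> = 2 * pi"
    using arc_angle_le_2pi[of P s x] by (fastforce simp: \<alpha>_def)
  thus False
  proof cases
    case 1
    have "open (f -` interior P)"
      unfolding f_def by (intro open_vimage continuous_intros) auto
    moreover have "\<theta> + \<alpha> \<in> f -` interior P"
      using arc arc_angle_nonneg[of P s x] by (simp add: \<alpha>_def)
    ultimately obtain \<delta> where "\<delta> > 0" "ball (\<theta> + \<alpha>) \<delta> \<subseteq> f -` interior P"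
      using open_contains_ball by blast
    define w where "w = \<alpha> + min (\<delta> / 2) (2 * pi - \<alpha>)"
    \<comment> \<open>the interior is open, so the arc extends beyond the supremum\<close>
    have "\<forall>t\<in>{\<theta>..\<theta> + w}. f t \<in> interior P"
    proof
      fix t assume "t \<in> {\<theta>..\<theta> + w}"
      show "f t \<in> interior P"
      proof (cases "t \<le> \<theta> + \<alpha>")
        case True thus ?thesis using arc \<open>t \<in> {\<theta>..\<theta> + w}\<close> by auto
      next
        case False
        hence "t \<in> ball (\<theta> + \<alpha>) \<delta>"
          using \<open>t \<in> {\<theta>..\<theta> + w}\<close> \<open>\<delta> > 0\<close> by (auto simp: w_def dist_real_def)
        thus ?thesis using \<open>ball (\<theta> + \<alpha>) \<delta> \<subseteq> f -` interior P\<close> by blast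
      qed
    qed
    moreover have "0 \<le> w" "w \<le> 2 * pi"
      using 1 arc_angle_nonneg[of P s x] \<open>\<delta> > 0\<close> by (auto simp: w_def \<alpha>_def)
    ultimately have "w \<le> \<alpha>"
      using arc_angle_ge[of w \<theta> s x P] by (simp add: \<alpha>_def f_def)
    thus False using 1 \<open>\<delta> > 0\<close> by (simp add: w_def)
  next
    case 2
    obtain b where "b \<in> B" "dist s b = x"
      using assms(3) unfolding sphere_def by blast
    hence "norm (b - s) = x" by (simp add: dist_norm norm_minus_commute)
    then obtain t where "t \<in> {\<theta>..\<theta> + 2 * pi}" "b = f t"
      using circle_point_eq_cis[OF _ assms(2), of b s \<theta>] unfolding f_def by blast
    hence "b \<in> interior P" using arc 2 by simp
    thus False using assms(1) \<open>b \<in> B\<close> by blast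
  qed
qed

lemma spiral_sub_center:
  "spiral a \<theta>0 s \<phi> - s = of_real (a * exp (\<phi> * cot spiral_beta)) * cis (\<theta>0 + \<phi>)"
  by (simp add: spiral_def)

lemma norm_spiral_sub_center:
  "a \<ge> 0 \<Longrightarrow> norm (spiral a \<theta>0 s \<phi> - s) = a * exp (\<phi> * cot spiral_beta)"
  by (simp add: spiral_sub_center norm_mult)

lemma continuous_on_spiral: "continuous_on UNIV (spiral a \<theta>0 s)"
  unfolding spiral_def by (intro continuous_intros)

lemma spiral_near_center:
  fixes a r \<theta>0 :: real and s :: complex
  assumes "a > 0" "r > 0"
  obtains t1 where "\<And>t. t \<le> t1 \<Longrightarrow> spiral a \<theta>0 s t \<in> ball s r"
proof
  fix t assume "t \<le> ln (r / (2 * a)) / cot spiral_beta"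
  hence "t * cot spiral_beta \<le> ln (r / (2 * a))"
    using cot_spiral_beta_pos by (simp add: pos_le_divide_eq)
  hence "a * exp (t * cot spiral_beta) \<le> r / 2"
    using assms by (simp add: ln_ge_iff field_simps)
  thus "spiral a \<theta>0 s t \<in> ball s r"
    using assms norm_spiral_sub_center[of a \<theta>0 s t] by (simp add: dist_norm norm_minus_commute)
qed

text \<open>The choice of \<open>\<beta>\<close> makes the chord of the convex function \<open>\<alpha> \<mapsto> exp (\<alpha> cot \<beta>)\<close> over one
full turn equal to \<open>1 + \<alpha>\<close>.\<close>

lemma exp_cot_spiral_beta_le:
  assumes "0 \<le> \<alpha>" "\<alpha> \<le> 2 * pi"
  shows "exp (\<alpha> * cot spiral_beta) \<le> 1 + \<alpha>"
proof -
  define u where "u = \<alpha> / (2 * pi)"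
  have u: "0 \<le> u" "u \<le> 1" using assms by (auto simp: u_def)
  have "exp (2 * pi * cot spiral_beta) = 2 * pi + 1"
    using pi_gt_zero by (simp add: cot_spiral_beta add_pos_pos)
  moreover have "exp ((1 - u) *\<^sub>R 0 + u *\<^sub>R (2 * pi * cot spiral_beta))
                   \<le> (1 - u) * exp 0 + u * exp (2 * pi * cot spiral_beta)"
    using u by (intro convex_onD[OF exp_convex]) auto
  moreover have "(1 - u) *\<^sub>R 0 + u *\<^sub>R (2 * pi * cot spiral_beta) = \<alpha> * cot spiral_beta"
    by (simp add: u_def)
  ultimately have "exp (\<alpha> * cot spiral_beta) \<le> (1 - u) + u * (2 * pi + 1)"
    by (metis exp_zero mult.right_neutral)
  also have "\<dots> = 1 + \<alpha>"
    by (simp add: u_def field_simps)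
  finally show ?thesis .
qed

lemma spiral_exits_interior_before:
  assumes "s \<in> kernel P" "B \<inter> interior P = {}" "a > 0" "x > 0" "sphere s x \<inter> B \<noteq> {}"
  shows "\<exists>t \<le> ln (x / a) / cot spiral_beta + arc_angle P s x. spiral a \<theta>0 s t \<notin> interior P"
proof -
  define k where "k = cot spiral_beta"
  define \<phi>0 where "\<phi>0 = ln (x / a) / k"
  have k: "k > 0" using cot_spiral_beta_pos by (simp add: k_def)
  obtain t' where t': "t' \<in> {\<theta>0 + \<phi>0..\<theta>0 + \<phi>0 + arc_angle P s x}"
    and out: "s + of_real x * cis t' \<notin> interior P"
    using circle_exits_interior_within_arc_angle[OF assms(2,4,5), of "\<theta>0 + \<phi>0"] by auto
  define t where "t = t' - \<theta>0"
  define r where "r = a * exp (t * k)"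
  have "x = a * exp (\<phi>0 * k)" using k assms(3,4) by (simp add: \<phi>0_def)
  also have "\<dots> \<le> r" using t' k assms(3) by (simp add: r_def t_def)
  finally have "0 < x / r" "x / r \<le> 1" using assms(4) by auto
  \<comment> \<open>contracting the spiral point towards \<open>s\<close> lands on the circle\<close>
  moreover have "s + of_real (x / r) * (spiral a \<theta>0 s t - s) = s + of_real x * cis t'"
    using assms(3) by (simp add: spiral_sub_center r_def k_def t_def)
  ultimately have "spiral a \<theta>0 s t \<notin> interior P"
    using kernel_contraction_in_interior[OF assms(1)] out by metis
  moreover have "t \<le> \<phi>0 + arc_angle P s x" using t' by (simp add: t_def)
  ultimately show ?thesis by (auto simp: \<phi>0_def k_def)
qed

lemma spiral_length_le_circular_strategy:
  assumes "s \<in> kernel P" "B \<inter> interior P = {}" "a > 0" "x > 0" "sphere s x \<inter> B \<noteq> {}"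
    and first_exit: "\<And>t. spiral a \<theta>0 s t \<notin> interior P \<Longrightarrow> \<phi> \<le> t"
  shows "spiral_length a \<phi> \<le> x * (1 + arc_angle P s x) / cos spiral_beta"
proof -
  define k where "k = cot spiral_beta"
  define \<alpha> where "\<alpha> = arc_angle P s x"
  have k: "k > 0" using cot_spiral_beta_pos by (simp add: k_def)
  have "\<phi> \<le> ln (x / a) / k + \<alpha>"
    using spiral_exits_interior_before[OF assms(1-5)] first_exit by (fastforce simp: k_def \<alpha>_def)
  hence "a * exp (\<phi> * k) \<le> a * exp ((ln (x / a) / k + \<alpha>) * k)"
    using k assms(3) by (simp add: mult_right_mono)
  also have "\<dots> = x * exp (\<alpha> * k)"
    using k assms(3,4) by (simp add: distrib_right exp_add)
  also have "\<dots> \<le> x * (1 + \<alpha>)"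
    using exp_cot_spiral_beta_le[OF arc_angle_nonneg arc_angle_le_2pi] assms(4)
    by (simp add: \<alpha>_def k_def)
  finally show ?thesis
    using cos_spiral_beta_pos by (simp add: spiral_length_def k_def \<alpha>_def divide_right_mono)
qed

lemma first_exit_time:
  fixes \<gamma> :: "real \<Rightarrow> 'a::real_normed_vector"
  assumes "continuous_on UNIV \<gamma>" "closed B" "frontier U \<subseteq> B" "B \<inter> U = {}"
    and inside: "\<And>t. t \<le> t1 \<Longrightarrow> \<gamma> t \<in> U" and exit: "\<gamma> u \<notin> U"
  obtains \<phi> where "\<gamma> \<phi> \<in> B" "\<And>t. \<gamma> t \<notin> U \<Longrightarrow> \<phi> \<le> t"
proof -
  define E where "E = \<gamma> -` B"
  have hit: "\<exists>\<phi>\<in>E. \<phi> \<le> t" if "\<gamma> t \<notin> U" for t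
  proof -
    have "t1 \<le> t" using inside[of t] that by linarith
    hence "\<gamma> t1 \<in> \<gamma> ` {t1..t}" "\<gamma> t \<in> \<gamma> ` {t1..t}" by auto
    moreover have "connected (\<gamma> ` {t1..t})"
      by (intro connected_continuous_image continuous_on_subset[OF assms(1)]) auto
    ultimately have "\<gamma> ` {t1..t} \<inter> frontier U \<noteq> {}"
      using inside[of t1] that by (intro connected_Int_frontier) auto
    thus ?thesis using assms(3) by (auto simp: E_def)
  qed
  have "E \<noteq> {}" using hit[OF exit] by blast
  moreover have "bdd_below E"
    using inside assms(4) by (intro bdd_belowI[of _ t1]) (force simp: E_def)
  moreover have "closed E"
    unfolding E_def using assms(1,2) by (simp add: closed_vimage)
  ultimately have "Inf E \<in> E" by (rule closed_contains_Inf)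
  moreover have "Inf E \<le> t" if "\<gamma> t \<notin> U" for t
    using hit[OF that] cInf_lower[OF _ \<open>bdd_below E\<close>] by (meson order_trans)
  ultimately show ?thesis using that by (auto simp: E_def)
qed

lemma environment_circle_meets_boundary:
  assumes "environment P B" "s \<in> interior P"
  obtains x where "x > 0" "sphere s x \<inter> B \<noteq> {}"
proof -
  obtain b where "b \<in> B" using environment_boundary(2)[OF assms(1)] by blast
  hence "b \<noteq> s" using environment_boundary(3)[OF assms(1)] assms(2) by blast
  hence "dist s b > 0" by simp
  moreover have "b \<in> sphere s (dist s b) \<inter> B" using \<open>b \<in> B\<close> by simp
  ultimately show ?thesis using that by blast
qed

lemma spiral_first_boundary_hit:
  assumes "environment P B" "s \<in> kernel P" "s \<in> interior P" "a > 0"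
  obtains \<phi> where "spiral a \<theta>0 s \<phi> \<in> B" "\<And>t. spiral a \<theta>0 s t \<notin> interior P \<Longrightarrow> \<phi> \<le> t"
proof -
  note boundary = environment_boundary[OF assms(1)]
  obtain r where "r > 0" "ball s r \<subseteq> interior P"
    using assms(3) open_contains_ball open_interior by blast
  obtain t1 where "\<And>t. t \<le> t1 \<Longrightarrow> spiral a \<theta>0 s t \<in> ball s r"
    using spiral_near_center[of a r \<theta>0 s] assms(4) \<open>r > 0\<close> by blast
  hence inside: "\<And>t. t \<le> t1 \<Longrightarrow> spiral a \<theta>0 s t \<in> interior P"
    using \<open>ball s r \<subseteq> interior P\<close> by blast
  obtain x where x: "x > 0" "sphere s x \<inter> B \<noteq> {}"
    using environment_circle_meets_boundary[OF assms(1,3)] by blast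
  obtain u where u: "spiral a \<theta>0 s u \<notin> interior P"
    using spiral_exits_interior_before[OF assms(2) boundary(3) assms(4) x] by blast
  obtain \<phi> where "spiral a \<theta>0 s \<phi> \<in> B" "\<And>t. spiral a \<theta>0 s t \<notin> interior P \<Longrightarrow> \<phi> \<le> t"
    using first_exit_time[OF continuous_on_spiral boundary(1,4,3) inside u] by blast
  thus ?thesis by (rule that)
qed

lemma spiral_length_le_certificate_length:
  assumes "environment P B" "s \<in> kernel P" "s \<in> interior P" "a > 0"
    and first_exit: "\<And>t. spiral a \<theta>0 s t \<notin> interior P \<Longrightarrow> \<phi> \<le> t"
  shows "spiral_length a \<phi> \<le> certificate_length P B s / cos spiral_beta"
proof -
  have "spiral_length a \<phi> * cos spiral_beta \<le> certificate_length P B s"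
    unfolding certificate_length_def
  proof (rule cInf_greatest)
    obtain x where "x > 0" "sphere s x \<inter> B \<noteq> {}"
      using environment_circle_meets_boundary[OF assms(1,3)] by blast
    thus "{x * (1 + arc_angle P s x) |x. x > 0 \<and> sphere s x \<inter> B \<noteq> {}} \<noteq> {}"
      by blast
  next
    fix y assume "y \<in> {x * (1 + arc_angle P s x) |x. x > 0 \<and> sphere s x \<inter> B \<noteq> {}}"
    then obtain x where "y = x * (1 + arc_angle P s x)" "x > 0" "sphere s x \<inter> B \<noteq> {}"
      by blast
    thus "spiral_length a \<phi> * cos spiral_beta \<le> y"
      using spiral_length_le_circular_strategy[OF assms(2)
          environment_boundary(3)[OF assms(1)] assms(4) _ _ first_exit]
        cos_spiral_beta_pos by (simp add: pos_le_divide_eq)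
  qed
  thus ?thesis using cos_spiral_beta_pos by (simp add: pos_le_divide_eq)
qed

theorem theorem1:
  fixes P B :: "complex set" and s :: complex and a \<theta>0 :: real
  assumes "environment P B"
    and "s \<in> kernel P"
    and "s \<in> interior P"
    and "a > 0"
  shows "\<exists>\<phi>. spiral a \<theta>0 s \<phi> \<in> B \<and>
           spiral_length a \<phi> < 3.318674 * certificate_length P B s"
proof -
  obtain \<phi> where \<phi>: "spiral a \<theta>0 s \<phi> \<in> B"
    and first_exit: "\<And>t. spiral a \<theta>0 s t \<notin> interior P \<Longrightarrow> \<phi> \<le> t"
    using spiral_first_boundary_hit[OF assms] by blast
  define cert where "cert = certificate_length P B s"
  have le: "spiral_length a \<phi> \<le> 1 / cos spiral_beta * cert"
    using spiral_length_le_certificate_length[OF assms first_exit] by (simp add: cert_def)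
  moreover have "spiral_length a \<phi> > 0"
    using assms(4) cos_spiral_beta_pos by (simp add: spiral_length_def)
  ultimately have "0 < 1 / cos spiral_beta * cert"
    by linarith
  hence "cert > 0"
    by (rule zero_less_mult_pos) (simp add: cos_spiral_beta_pos)
  hence "1 / cos spiral_beta * cert < 3.318674 * cert"
    by (rule mult_strict_right_mono[OF inverse_cos_spiral_beta_less])
  hence "spiral_length a \<phi> < 3.318674 * cert"
    by (rule order_le_less_trans[OF le])
  thus ?thesis using \<phi> unfolding cert_def by blast
qed

end
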